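(* The Brennan conjecture holds for univalent rational functions: for every $R\in\mathcal{U}_R$ and every $\tau\le-2$ one has $\beta_R(\tau)\le|\tau|-1$; in particular $\beta_R(-2)\le1$ for all $R\in\mathcal{U}_R$, and $\sup_{R\in\mathcal{U}_R}\beta_R(-2)=1$.
   Context: $\Delta$ is the unit disk. $\mathcal{U}_R$ is the class of rational functions $R$ that are univalent in $\Delta$ (hence without poles in $\Delta$) with $R(0)=0,R'(0)=1$. For such $R$ and real $\tau$, $\beta_R(\tau)=\limsup_{r\to1^-}\frac{\log\int_{-\pi}^{\pi}|R'(re^{i\theta})|^\tau d\theta}{|\log(1-r)|}$. *)

theory Defs
  imports "HOL-Analysis.Analysis" "HOL-Computational_Algebra.Polynomial" "HOL-Library.Liminf_Limsup"
begin

definition univalent_rational :: "(complex \<Rightarrow> complex) set" where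
  "univalent_rational = {R. (\<exists>p q :: complex poly.
        (\<forall>z\<in>ball 0 1. poly q z \<noteq> 0) \<and> R = (\<lambda>z. poly p z / poly q z))
      \<and> inj_on R (ball 0 1) \<and> R 0 = 0 \<and> deriv R 0 = 1}"

definition integral_means_spectrum :: "(complex \<Rightarrow> complex) \<Rightarrow> real \<Rightarrow> ereal" where
  "integral_means_spectrum R \<tau> =
     Limsup (at_left 1) (\<lambda>r::real. ereal
        (ln (integral {-pi..pi} (\<lambda>\<theta>. cmod (deriv R (complex_of_real r * cis \<theta>)) powr \<tau>))
         / \<bar>ln (1 - r)\<bar>))"

end

theory Submission
  imports Defs "HOL-Complex_Analysis.Complex_Analysis" "HOL-Real_Asymp.Real_Asymp"
begin

text \<open>Near a point \<open>b\<close> of the unit circle, \<open>R\<close> either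
  has a pole or extends holomorphically, with \<open>R - R b\<close> vanishing to some order \<open>m\<close> at \<open>b\<close>.
  Univalence forces \<open>m \<le> 2\<close>: otherwise \<open>R = R b + g ^ m\<close> with \<open>g\<close> conformal at \<open>b\<close>, and \<open>g\<close> maps
  the disc near \<open>b\<close> onto almost a half-disc at \<open>0\<close>, which contains two points \<open>w\<close> and \<open>\<omega> w\<close>
  (\<open>\<omega>\<close> a primitive \<open>m\<close>-th root of unity) with equal \<open>m\<close>-th powers. Hence \<open>|R' z| \<ge> c |z - b|\<close>
  near each boundary point, and by compactness \<open>|R' z| \<ge> c |z - a|\<close> with \<open>a\<close> ranging over a finite
  subset of the circle. As the integral of \<open>|r e^(i\<theta>) - a| ^ \<tau>\<close> over the circle is
  \<open>O((1 - r) ^ (\<tau> + 1))\<close> for \<open>\<tau> \<le> -2\<close>, this gives \<open>\<beta>_R(\<tau>) \<le> |\<tau>| - 1\<close>. The bound is attained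
  at \<open>\<tau> = -2\<close> by \<open>z - z\<^sup>2 / 2\<close>, whose derivative \<open>1 - z\<close> vanishes at \<open>1\<close>.\<close>

lemma one_minus_cos_le: "1 - cos x \<le> x\<^sup>2 / 2" for x :: real
proof -
  have *: "1 - cos x \<le> x\<^sup>2 / 2" if "x \<ge> 0" for x :: real
  proof -
    let ?f = "\<lambda>x::real. x\<^sup>2 / 2 - 1 + cos x"
    have "?f 0 \<le> ?f x"
    proof (rule DERIV_nonneg_imp_nondecreasing[OF that])
      fix u :: real assume "0 \<le> u"
      then show "\<exists>y. (?f has_real_derivative y) (at u) \<and> 0 \<le> y"
        by (intro exI[of _ "u - sin u"]) (auto intro!: derivative_eq_intros simp: sin_x_le_x)
    qed
    then show ?thesis by simp
  qed
  show ?thesis using *[of x] *[of "-x"] by (cases "x \<ge> 0") auto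
qed

lemma sin_ge_cubic: "x - x^3 / 6 \<le> sin x" if "x \<ge> 0" for x :: real
proof -
  let ?f = "\<lambda>x::real. sin x - x + x^3 / 6"
  have "?f 0 \<le> ?f x"
  proof (rule DERIV_nonneg_imp_nondecreasing[OF that])
    fix u :: real
    show "\<exists>y. (?f has_real_derivative y) (at u) \<and> 0 \<le> y"
      using one_minus_cos_le[of u]
      by (intro exI[of _ "cos u - 1 + u\<^sup>2 / 2"]) (auto intro!: derivative_eq_intros)
  qed
  then show ?thesis by simp
qed

lemma one_minus_cos_ge:
  fixes x :: real
  assumes "\<bar>x\<bar> \<le> pi"
  shows "x\<^sup>2 / 16 \<le> 1 - cos x"
proof -
  define y where "y = \<bar>x\<bar> / 2"
  have y: "0 \<le> y" "y\<^sup>2 \<le> 3"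
  proof -
    show "0 \<le> y" by (simp add: y_def)
    have "y \<le> 8 / 5" using assms pi_approx by (simp add: y_def)
    then have "y\<^sup>2 \<le> (8 / 5)\<^sup>2" using \<open>0 \<le> y\<close> by (intro power_mono)
    then show "y\<^sup>2 \<le> 3" by (simp add: power2_eq_square)
  qed
  have "y / 2 \<le> y - y^3 / 6"
    using mult_left_mono[OF y(2) y(1)] by (simp add: power2_eq_square power3_eq_cube)
  then have "y / 2 \<le> sin y" using sin_ge_cubic[OF y(1)] by linarith
  have "x\<^sup>2 / 16 = (y / 2)\<^sup>2" by (simp add: y_def power_divide)
  also have "\<dots> \<le> (sin y)\<^sup>2" using \<open>y / 2 \<le> sin y\<close> y(1) by (intro power_mono) auto
  also have "\<dots> \<le> 2 * (sin y)\<^sup>2" by simp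
  also have "\<dots> = 1 - cos x" using cos_double_sin[of y] by (simp add: y_def cos_abs_real)
  finally show ?thesis .
qed

lemma norm_rcis_sub_cis_sq:
  "(cmod (of_real r * cis t - cis p))\<^sup>2 = (1 - r)\<^sup>2 + 2 * r * (1 - cos (t - p))"
proof -
  have "(cmod (of_real r * cis t - cis p))\<^sup>2 = (r * cos t - cos p)\<^sup>2 + (r * sin t - sin p)\<^sup>2"
    by (simp add: cmod_power2)
  also have "\<dots> = r\<^sup>2 * ((sin t)\<^sup>2 + (cos t)\<^sup>2) + ((sin p)\<^sup>2 + (cos p)\<^sup>2)
                  - 2 * r * (cos t * cos p + sin t * sin p)"
    by (simp add: power2_diff power_mult_distrib algebra_simps
             del: sin_cos_squared_add sin_cos_squared_add2 sin_cos_squared_add3)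
  also have "\<dots> = (1 - r)\<^sup>2 + 2 * r * (1 - cos (t - p))"
    by (simp add: cos_diff power2_eq_square algebra_simps)
  finally show ?thesis .
qed

lemma norm_rcis_sub_ge:
  assumes "0 \<le> r" "r < 1" "cmod a = 1"
  shows "1 - r \<le> cmod (of_real r * cis t - a)"
  using norm_triangle_ineq2[of a "of_real r * cis t"] assms
  by (simp add: norm_mult norm_minus_commute)

lemma inverse_quadratic_integral_le:
  fixes e c :: real
  assumes e: "e > 0"
  shows "(\<lambda>t. 1 / (e\<^sup>2 + (t - c)\<^sup>2 / 16)) integrable_on {-pi..pi}"
    and "integral {-pi..pi} (\<lambda>t. 1 / (e\<^sup>2 + (t - c)\<^sup>2 / 16)) \<le> 4 * pi / e"
proof -
  define F where "F t = 4 / e * arctan ((t - c) / (4 * e))" for t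
  have "(F has_real_derivative 1 / (e\<^sup>2 + (t - c)\<^sup>2 / 16)) (at t)" for t
  proof -
    have "(F has_real_derivative 4 / e * (inverse (1 + ((t - c) / (4 * e))\<^sup>2) * (1 / (4 * e)))) (at t)"
      unfolding F_def using e by (auto intro!: derivative_eq_intros)
    moreover have "0 < 16 * e\<^sup>2 + (t - c)\<^sup>2" using e by (simp add: add_pos_nonneg)
    ultimately show ?thesis using e by (simp add: field_simps power2_eq_square)
  qed
  then have F: "((\<lambda>t. 1 / (e\<^sup>2 + (t - c)\<^sup>2 / 16)) has_integral F pi - F (-pi)) {-pi..pi}"
    by (intro fundamental_theorem_of_calculus)
       (auto simp: has_real_derivative_iff_has_vector_derivative[symmetric] has_field_derivative_at_within)
  then show "(\<lambda>t. 1 / (e\<^sup>2 + (t - c)\<^sup>2 / 16)) integrable_on {-pi..pi}" by blast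
  have "arctan ((pi - c) / (4 * e)) - arctan ((- pi - c) / (4 * e)) \<le> pi"
    using arctan_ubound[of "(pi - c) / (4 * e)"] arctan_lbound[of "(- pi - c) / (4 * e)"] by linarith
  then have "F pi - F (-pi) \<le> 4 / e * pi"
    unfolding F_def right_diff_distrib[symmetric] using e by (intro mult_left_mono) auto
  then show "integral {-pi..pi} (\<lambda>t. 1 / (e\<^sup>2 + (t - c)\<^sup>2 / 16)) \<le> 4 * pi / e"
    using integral_unique[OF F] by simp
qed

text \<open>Up to a shift by \<open>\<plusminus>2\<pi>\<close>, \<open>t - p\<close> lies in \<open>[-\<pi>, \<pi>]\<close>, where \<open>1 - cos\<close> is comparable to the square.\<close>
lemma inverse_norm_rcis_sub_cis_sq_le:
  fixes r t p :: real
  assumes r: "1/2 \<le> r" "r < 1" and t: "\<bar>t - p\<bar> \<le> 2 * pi"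
  shows "1 / (cmod (of_real r * cis t - cis p))\<^sup>2 \<le>
           1 / ((1 - r)\<^sup>2 + (t - p)\<^sup>2 / 16) + 1 / ((1 - r)\<^sup>2 + (t - (p + 2 * pi))\<^sup>2 / 16)
         + 1 / ((1 - r)\<^sup>2 + (t - (p - 2 * pi))\<^sup>2 / 16)"
proof -
  obtain s where s: "\<bar>s\<bar> \<le> pi" "cos s = cos (t - p)"
    and s_cases: "s = t - p \<or> s = t - (p + 2 * pi) \<or> s = t - (p - 2 * pi)"
  proof -
    have "cos (t - (p + 2 * pi)) = cos (t - p)" "cos (t - (p - 2 * pi)) = cos (t - p)"
      by (simp_all add: cos_diff cos_add sin_diff)
    then show thesis
      using that[of "t - p"] that[of "t - (p + 2 * pi)"] that[of "t - (p - 2 * pi)"] t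
      by (cases "\<bar>t - p\<bar> \<le> pi"; cases "t - p > 0") auto
  qed
  have "s\<^sup>2 / 16 \<le> 2 * r * (1 - cos (t - p))"
    using one_minus_cos_ge[OF s(1)] s(2) r mult_right_mono[of 1 "2 * r" "1 - cos s"] by simp
  then have "1 / (cmod (of_real r * cis t - cis p))\<^sup>2 \<le> 1 / ((1 - r)\<^sup>2 + s\<^sup>2 / 16)"
    using r by (simp add: norm_rcis_sub_cis_sq frac_le add_pos_nonneg)
  moreover have "0 \<le> 1 / ((1 - r)\<^sup>2 + x\<^sup>2 / 16)" for x
    by (simp add: add_nonneg_nonneg)
  ultimately show ?thesis using s_cases
    by (elim disjE) (simp_all add: add_increasing add_increasing2)
qed

lemma circle_inverse_dist_sq_integral_le:
  assumes r: "1/2 \<le> r" "r < 1" and a: "cmod a = 1"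
  shows "(\<lambda>t. 1 / (cmod (of_real r * cis t - a))\<^sup>2) integrable_on {-pi..pi}"
    and "integral {-pi..pi} (\<lambda>t. 1 / (cmod (of_real r * cis t - a))\<^sup>2) \<le> 12 * pi / (1 - r)"
proof -
  define p where "p = Arg a"
  have a_eq: "a = cis p" using rcis_cmod_Arg[of a] a by (simp add: p_def rcis_def)
  have p: "-pi < p" "p \<le> pi" using Arg_bounded[of a] by (auto simp: p_def)
  have e: "1 - r > 0" using r by simp
  have "of_real r * cis t \<noteq> a" for t using norm_rcis_sub_ge[of r a t] r a by auto
  then show int: "(\<lambda>t. 1 / (cmod (of_real r * cis t - a))\<^sup>2) integrable_on {-pi..pi}"
    by (intro integrable_continuous_interval) (auto intro!: continuous_intros)
  define g where "g c t = 1 / ((1 - r)\<^sup>2 + (t - c)\<^sup>2 / 16)" for c t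
  have g: "g c integrable_on {-pi..pi}" "integral {-pi..pi} (g c) \<le> 4 * pi / (1 - r)" for c
    unfolding g_def using inverse_quadratic_integral_le[OF e] by auto
  have "integral {-pi..pi} (\<lambda>t. 1 / (cmod (of_real r * cis t - a))\<^sup>2)
        \<le> integral {-pi..pi} (\<lambda>t. g p t + g (p + 2 * pi) t + g (p - 2 * pi) t)"
    using inverse_norm_rcis_sub_cis_sq_le[OF r] p
    by (intro integral_le int integrable_add g) (auto simp: g_def a_eq)
  also have "\<dots> = integral {-pi..pi} (g p) + integral {-pi..pi} (g (p + 2 * pi))
                  + integral {-pi..pi} (g (p - 2 * pi))"
    by (simp add: integral_add g integrable_add)
  also have "\<dots> \<le> 12 * pi / (1 - r)" using g(2)[of p] g(2)[of "p + 2 * pi"] g(2)[of "p - 2 * pi"] by simp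
  finally show "integral {-pi..pi} (\<lambda>t. 1 / (cmod (of_real r * cis t - a))\<^sup>2) \<le> 12 * pi / (1 - r)" .
qed

lemma circle_dist_powr_integral_le:
  assumes r: "1/2 \<le> r" "r < 1" and a: "cmod a = 1" and \<tau>: "\<tau> \<le> -2"
  shows "(\<lambda>t. cmod (of_real r * cis t - a) powr \<tau>) integrable_on {-pi..pi}"
    and "integral {-pi..pi} (\<lambda>t. cmod (of_real r * cis t - a) powr \<tau>) \<le> 12 * pi * (1 - r) powr (\<tau> + 1)"
proof -
  define e where "e = 1 - r"
  have e: "e > 0" using r by (simp add: e_def)
  have dist_ge: "e \<le> cmod (of_real r * cis t - a)" for t
    using norm_rcis_sub_ge[of r a t] r a by (simp add: e_def)
  then have "of_real r * cis t \<noteq> a" for t using e by (metis norm_zero not_le right_minus_eq)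
  then show int: "(\<lambda>t. cmod (of_real r * cis t - a) powr \<tau>) integrable_on {-pi..pi}"
    by (intro integrable_continuous_interval) (auto intro!: continuous_intros)
  note sq = circle_inverse_dist_sq_integral_le[OF r a]
  have "cmod (of_real r * cis t - a) powr \<tau> \<le> e powr (\<tau> + 2) * (1 / (cmod (of_real r * cis t - a))\<^sup>2)" for t
  proof -
    define x where "x = cmod (of_real r * cis t - a)"
    have x: "e \<le> x" "0 < x" using dist_ge[of t] e by (auto simp: x_def)
    have "x powr \<tau> = x powr (\<tau> + 2) * x powr (-2)" by (simp add: powr_add[symmetric])
    also have "\<dots> \<le> e powr (\<tau> + 2) * x powr (-2)"
      using x \<tau> e by (intro mult_right_mono powr_mono2') auto
    also have "x powr (-2) = 1 / x\<^sup>2" using x by (simp add: powr_minus powr_numeral divide_inverse)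
    finally show ?thesis unfolding x_def .
  qed
  then have "integral {-pi..pi} (\<lambda>t. cmod (of_real r * cis t - a) powr \<tau>)
      \<le> e powr (\<tau> + 2) * integral {-pi..pi} (\<lambda>t. 1 / (cmod (of_real r * cis t - a))\<^sup>2)"
    unfolding integral_mult_right[symmetric]
    by (intro integral_le int integrable_cmul[OF sq(1), unfolded real_scaleR_def])
  also have "\<dots> \<le> e powr (\<tau> + 2) * (12 * pi / e)"
    using sq(2) by (intro mult_left_mono) (auto simp: e_def)
  also have "\<dots> = 12 * pi * e powr (\<tau> + 1)"
    using e by (simp add: powr_add field_simps power2_eq_square)
  finally show "integral {-pi..pi} (\<lambda>t. cmod (of_real r * cis t - a) powr \<tau>) \<le> 12 * pi * (1 - r) powr (\<tau> + 1)"
    by (simp add: e_def)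
qed

lemma integral_pos_of_continuous:
  fixes f :: "real \<Rightarrow> real"
  assumes "continuous_on {a..b} f" "a < b" "\<And>t. t \<in> {a..b} \<Longrightarrow> 0 < f t"
  shows "0 < integral {a..b} f"
proof -
  obtain t0 where t0: "t0 \<in> {a..b}" "\<And>t. t \<in> {a..b} \<Longrightarrow> f t0 \<le> f t"
    using continuous_attains_inf[OF compact_Icc _ assms(1)] assms(2) by fastforce
  have "0 < (b - a) * f t0" using assms(2,3) t0(1) by simp
  also have "\<dots> = integral {a..b} (\<lambda>t. f t0)" using assms(2) by simp
  also have "\<dots> \<le> integral {a..b} f"
    using t0 assms(1) by (intro integral_le integrable_continuous_interval) auto
  finally show ?thesis .
qed

section \<open>Integral means\<close>

lemma Limsup_ln_ratio_le:
  fixes I :: "real \<Rightarrow> real" and C \<sigma> :: real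
  assumes C: "C > 0" and bound: "\<forall>\<^sub>F r in at_left 1. 0 < I r \<and> I r \<le> C * (1 - r) powr (- \<sigma>)"
  shows "Limsup (at_left 1) (\<lambda>r. ereal (ln (I r) / \<bar>ln (1 - r)\<bar>)) \<le> ereal \<sigma>"
proof -
  have "\<forall>\<^sub>F r in at_left 1. r \<in> {0<..<1::real}" by (intro eventually_at_left_real) simp
  with bound have "\<forall>\<^sub>F r in at_left 1. ln (I r) / \<bar>ln (1 - r)\<bar> \<le> ln C / \<bar>ln (1 - r)\<bar> + \<sigma>"
  proof eventually_elim
    case (elim r)
    define L where "L = \<bar>ln (1 - r)\<bar>"
    have L: "L > 0" using elim by (simp add: L_def)
    have "ln (I r) \<le> ln (C * (1 - r) powr (- \<sigma>))" using C elim by simp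
    also have "\<dots> = ln C + \<sigma> * L" using C elim by (simp add: L_def ln_mult ln_powr)
    finally have "ln (I r) / L \<le> (ln C + \<sigma> * L) / L" using L by (intro divide_right_mono) auto
    then show ?case using L by (simp add: L_def[symmetric] add_divide_distrib)
  qed
  then have "Limsup (at_left 1) (\<lambda>r. ereal (ln (I r) / \<bar>ln (1 - r)\<bar>))
               \<le> Limsup (at_left 1) (\<lambda>r. ereal (ln C / \<bar>ln (1 - r)\<bar> + \<sigma>))"
    by (intro Limsup_mono) (auto elim: eventually_mono)
  also have "\<dots> = ereal \<sigma>"
  proof (intro lim_imp_Limsup)
    have "((\<lambda>r::real. ln C / \<bar>ln (1 - r)\<bar> + \<sigma>) \<longlongrightarrow> \<sigma>) (at_left 1)" by real_asymp
    then show "((\<lambda>r. ereal (ln C / \<bar>ln (1 - r)\<bar> + \<sigma>)) \<longlongrightarrow> ereal \<sigma>) (at_left 1)"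
      by (rule tendsto_ereal)
  qed simp
  finally show ?thesis .
qed

lemma integral_means_le_of_dist_lower_bound:
  fixes f :: "complex \<Rightarrow> complex" and A :: "complex set"
  assumes f: "continuous_on (ball 0 1) f"
    and A: "finite A" "A \<subseteq> sphere 0 1" and c: "c > 0"
    and lower: "\<forall>z\<in>ball 0 1. \<exists>a\<in>A. c * cmod (z - a) \<le> cmod (f z)"
    and \<tau>: "\<tau> \<le> -2" and r: "1/2 \<le> r" "r < 1"
  shows "0 < integral {-pi..pi} (\<lambda>t. cmod (f (of_real r * cis t)) powr \<tau>)"
    and "integral {-pi..pi} (\<lambda>t. cmod (f (of_real r * cis t)) powr \<tau>)
           \<le> c powr \<tau> * card A * 12 * pi * (1 - r) powr (\<tau> + 1)"
proof -
  define z where "z t = of_real r * cis t" for t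
  have z: "z t \<in> ball 0 1" for t using r by (simp add: z_def norm_mult)
  have "\<forall>t. \<exists>a. a \<in> A \<and> c * cmod (z t - a) \<le> cmod (f (z t))" using lower z by blast
  then obtain a where a: "a t \<in> A" "c * cmod (z t - a t) \<le> cmod (f (z t))" for t
    by metis
  have dist_pos: "0 < cmod (z t - a t)" for t
    using a(1)[of t] A(2) z[of t] by auto
  have f_nz: "f (z t) \<noteq> 0" for t
    using a(2)[of t] dist_pos[of t] c by (smt (verit) mult_pos_pos norm_zero)
  have cont: "continuous_on {-pi..pi} (\<lambda>t. cmod (f (z t)) powr \<tau>)"
    using f_nz z unfolding z_def
    by (intro continuous_intros continuous_on_compose2[OF f]) (auto intro!: continuous_intros)
  then show "0 < integral {-pi..pi} (\<lambda>t. cmod (f (of_real r * cis t)) powr \<tau>)"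
    using f_nz unfolding z_def by (intro integral_pos_of_continuous) auto
  define h where "h a t = c powr \<tau> * cmod (z t - a) powr \<tau>" for a t
  note circle = circle_dist_powr_integral_le[OF r _ \<tau>, unfolded z_def[symmetric]]
  have A_sphere: "cmod a = 1" if "a \<in> A" for a using A(2) that by auto
  have h: "h a integrable_on {-pi..pi}" "integral {-pi..pi} (h a) \<le> c powr \<tau> * (12 * pi * (1 - r) powr (\<tau> + 1))"
    if "a \<in> A" for a
    using circle[OF A_sphere[OF that]] integrable_cmul[OF circle(1)[OF A_sphere[OF that]], of "c powr \<tau>"]
    unfolding h_def by (auto intro!: mult_left_mono)
  have "cmod (f (z t)) powr \<tau> \<le> (\<Sum>a\<in>A. h a t)" for t
  proof -
    have "cmod (f (z t)) powr \<tau> \<le> (c * cmod (z t - a t)) powr \<tau>"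
      using a(2) dist_pos c \<tau> by (intro powr_mono2') auto
    also have "\<dots> = h (a t) t" using c by (simp add: h_def powr_mult)
    also have "\<dots> \<le> (\<Sum>a\<in>A. h a t)" using a(1) A(1) by (intro member_le_sum) (auto simp: h_def)
    finally show ?thesis .
  qed
  then have "integral {-pi..pi} (\<lambda>t. cmod (f (z t)) powr \<tau>) \<le> integral {-pi..pi} (\<lambda>t. \<Sum>a\<in>A. h a t)"
    by (intro integral_le integrable_continuous_interval cont integrable_sum A(1) h)
  also have "\<dots> = (\<Sum>a\<in>A. integral {-pi..pi} (h a))" by (intro integral_sum A(1) h)
  also have "\<dots> \<le> (\<Sum>a\<in>A. c powr \<tau> * (12 * pi * (1 - r) powr (\<tau> + 1)))" by (intro sum_mono h)
  finally show "integral {-pi..pi} (\<lambda>t. cmod (f (of_real r * cis t)) powr \<tau>)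
                  \<le> c powr \<tau> * card A * 12 * pi * (1 - r) powr (\<tau> + 1)"
    by (simp add: z_def mult_ac)
qed

section \<open>Injective holomorphic maps near the unit circle\<close>

lemma continuous_on_ball_near_centre:
  fixes f :: "'a::metric_space \<Rightarrow> 'b::metric_space"
  assumes "continuous_on (ball b \<delta>) f" "0 < \<delta>" "0 < \<epsilon>"
  obtains \<rho> where "0 < \<rho>" "\<rho> \<le> \<delta>" "\<And>z. z \<in> ball b \<rho> \<Longrightarrow> dist (f z) (f b) < \<epsilon>"
proof -
  have "isCont f b" using assms(1,2) continuous_on_eq_continuous_at[of "ball b \<delta>" f] by simp
  then obtain d where "d > 0" "\<And>z. dist z b < d \<Longrightarrow> dist (f z) (f b) < \<epsilon>"
    using assms(3) unfolding continuous_at_eps_delta by blast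
  then show thesis using assms(2) by (intro that[of "min d \<delta>"]) (auto simp: dist_commute)
qed

lemma continuous_on_ball_norm_ge_half:
  fixes f :: "'a::metric_space \<Rightarrow> 'b::real_normed_vector"
  assumes "continuous_on (ball b \<delta>) f" "0 < \<delta>" "f b \<noteq> 0"
  obtains \<rho> where "0 < \<rho>" "\<rho> \<le> \<delta>" "\<And>z. z \<in> ball b \<rho> \<Longrightarrow> norm (f b) / 2 \<le> norm (f z)"
proof -
  obtain \<rho> where \<rho>: "0 < \<rho>" "\<rho> \<le> \<delta>" "\<And>z. z \<in> ball b \<rho> \<Longrightarrow> dist (f z) (f b) < norm (f b) / 2"
    using continuous_on_ball_near_centre[OF assms(1,2)] assms(3) by (metis half_gt_zero zero_less_norm_iff)
  have "norm (f b) / 2 \<le> norm (f z)" if "z \<in> ball b \<rho>" for z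
    using \<rho>(3)[OF that] norm_triangle_ineq2[of "f b" "f z"] by (simp add: dist_norm norm_minus_commute)
  then show thesis using \<rho> that by blast
qed

lemma cos_pi_div_pos:
  fixes m :: nat
  assumes "2 < m"
  shows "0 < cos (pi / m)"
proof -
  have "0 < pi / m" "pi / m < pi / 2" using assms pi_gt_zero by (auto simp: field_simps)
  then show ?thesis by (intro cos_gt_zero_pi) auto
qed

lemma holomorphic_nth_root_exists:
  assumes "convex S" "open S" "f holomorphic_on S" "\<And>z. z \<in> S \<Longrightarrow> f z \<noteq> 0" "n > 0"
  obtains g where "g holomorphic_on S" "\<And>z. z \<in> S \<Longrightarrow> g z ^ n = f z"
proof (cases "S = {}")
  case False
  then obtain z0 where "z0 \<in> S" by blast
  then obtain L where L: "L holomorphic_on S" "\<And>z. z \<in> S \<Longrightarrow> exp (L z) = f z"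
    using holomorphic_logarithm_exists[OF assms(1-4)] by metis
  show thesis
  proof
    show "(\<lambda>z. exp (L z / of_nat n)) holomorphic_on S" using assms(5) by (intro holomorphic_intros L) auto
    show "exp (L z / of_nat n) ^ n = f z" if "z \<in> S" for z
      using L(2)[OF that] assms(5) by (simp add: exp_of_nat_mult[symmetric])
  qed
next
  case True
  then show thesis by (intro that[of f]) (auto simp: holomorphic_on_def)
qed

lemma norm_divide_sub_one_le:
  fixes x y \<gamma> :: complex
  assumes "cmod (x - \<gamma>) < cmod \<gamma> * \<kappa> / 8" "cmod (y - \<gamma>) < cmod \<gamma> * \<kappa> / 8" "\<kappa> \<le> 1"
  shows "cmod (x / y - 1) \<le> \<kappa> / 2"
proof -
  define \<epsilon> where "\<epsilon> = cmod \<gamma> * \<kappa> / 8"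
  have "0 < \<epsilon>" using assms(1) norm_ge_zero[of "x - \<gamma>"] unfolding \<epsilon>_def by linarith
  moreover have "8 * \<epsilon> \<le> cmod \<gamma>" using assms(3) by (simp add: \<epsilon>_def mult_left_le)
  ultimately have \<epsilon>: "0 < \<epsilon>" "8 * \<epsilon> \<le> cmod \<gamma>" .
  have y: "cmod \<gamma> - \<epsilon> \<le> cmod y"
    using assms(2) norm_triangle_ineq2[of \<gamma> y] by (simp add: \<epsilon>_def norm_minus_commute)
  have "cmod (x - y) \<le> cmod (x - \<gamma>) + cmod (y - \<gamma>)" using norm_triangle_ineq4[of "x - \<gamma>" "y - \<gamma>"] by simp
  then have "cmod (x - y) \<le> 2 * \<epsilon>" using assms(1,2) unfolding \<epsilon>_def by linarith
  moreover have "y \<noteq> 0" using y \<epsilon> by auto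
  then have "x / y - 1 = (x - y) / y" by (simp add: field_simps)
  ultimately have "cmod (x / y - 1) \<le> 2 * \<epsilon> / (cmod \<gamma> - \<epsilon>)"
    using y \<epsilon> by (auto simp: norm_divide intro!: frac_le)
  also have "\<dots> \<le> \<kappa> / 2"
  proof -
    have "0 < \<kappa>" using \<epsilon>(1) by (simp add: \<epsilon>_def zero_less_mult_iff)
    then have "\<kappa> * \<epsilon> \<le> \<kappa> * (cmod \<gamma> / 2)" using \<epsilon> by (intro mult_left_mono) auto
    then have "4 * \<epsilon> \<le> \<kappa> * (cmod \<gamma> - \<epsilon>)" by (simp add: \<epsilon>_def algebra_simps)
    then show ?thesis using \<epsilon> by (simp add: divide_simps)
  qed
  finally show ?thesis .
qed

lemma sphere_add_scaled_in_ball: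
  fixes b u \<mu> :: complex and t \<kappa> :: real
  assumes b: "cmod b = 1" and u: "Re (cnj b * u) = - \<kappa>" "cmod u = 1"
    and \<mu>: "cmod (\<mu> - 1) \<le> \<kappa> / 2" and t: "0 < t" "t < \<kappa> / 4"
  shows "b + of_real t * (u * \<mu>) \<in> ball 0 1"
proof -
  define v where "v = u * \<mu>"
  have "Re (cnj b * v) = Re (cnj b * u) + Re (cnj b * u * (\<mu> - 1))"
    by (simp add: v_def algebra_simps)
  also have "Re (cnj b * u * (\<mu> - 1)) \<le> cmod (\<mu> - 1)"
    using complex_Re_le_cmod[of "cnj b * u * (\<mu> - 1)"] b u(2) by (simp add: norm_mult)
  finally have re: "Re (cnj b * v) \<le> - \<kappa> / 2" using u(1) \<mu> by linarith
  have "\<kappa> \<le> 1" using abs_Re_le_cmod[of "cnj b * u"] b u by (simp add: norm_mult)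
  then have "cmod v \<le> 2" using norm_triangle_ineq2[of \<mu> 1] \<mu> u(2) by (simp add: v_def norm_mult)
  then have v: "(cmod v)\<^sup>2 \<le> 4" using power_mono[of "cmod v" 2 2] by simp
  have "(cmod (b + of_real t * v))\<^sup>2 = (cmod b)\<^sup>2 + 2 * t * Re (cnj b * v) + t\<^sup>2 * (cmod v)\<^sup>2"
    unfolding cmod_power2 by (simp add: power2_eq_square algebra_simps)
  also have "\<dots> \<le> 1 - t * \<kappa> + t\<^sup>2 * 4"
  proof -
    have "2 * t * Re (cnj b * v) \<le> 2 * t * (- \<kappa> / 2)" using re t by (intro mult_left_mono) auto
    moreover have "t\<^sup>2 * (cmod v)\<^sup>2 \<le> t\<^sup>2 * 4" using v by (intro mult_left_mono) auto
    ultimately show ?thesis using b by simp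
  qed
  also have "\<dots> < 1"
    using mult_strict_left_mono[of "4 * t" \<kappa> t] t by (simp add: power2_eq_square algebra_simps)
  finally have "cmod (b + of_real t * v) < 1" by (simp add: power_less_one_iff)
  then show ?thesis by (simp add: v_def)
qed

lemma inward_directions_rotated_by_root_of_unity:
  fixes b :: complex
  assumes b: "cmod b = 1" and m: "m \<ge> 3"
  obtains u \<omega> where "cmod u = 1" "cmod \<omega> = 1" "\<omega> ^ m = 1" "\<omega> \<noteq> 1"
    "Re (cnj b * u) = - cos (pi / m)" "Re (cnj b * (\<omega> * u)) = - cos (pi / m)"
proof
  define u where "u = - b * cis (- pi / m)"
  define \<omega> where "\<omega> = cis (2 * pi / m)"
  have bb: "cnj b * b = 1" using complex_norm_square[of b] b by (simp add: mult.commute)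
  show "cmod u = 1" "cmod \<omega> = 1" using b by (simp_all add: u_def \<omega>_def norm_mult)
  have "\<omega> ^ m = cis (real m * (2 * pi / m))" unfolding \<omega>_def by (rule Complex.DeMoivre)
  then show "\<omega> ^ m = 1" using m by simp
  have "0 < 2 * pi / m" "2 * pi / m < pi" using m pi_gt_zero by (auto simp: field_simps)
  then have "sin (2 * pi / m) > 0" by (intro sin_gt_zero)
  then show "\<omega> \<noteq> 1" by (auto simp: \<omega>_def complex_eq_iff)
  have neg: "cnj b * (- b * w) = - w" for w
    using bb by (simp add: mult.assoc[symmetric])
  have "\<omega> * u = - b * cis (pi / m)"
    unfolding \<omega>_def u_def by (simp add: cis_mult field_simps mult.left_commute[of "cis _"])
  then show "Re (cnj b * u) = - cos (pi / m)" "Re (cnj b * (\<omega> * u)) = - cos (pi / m)"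
    unfolding u_def by (simp_all only: neg) simp_all
qed

lemma equal_powers_near_sphere_point:
  fixes h :: "complex \<Rightarrow> complex" and b u \<omega> :: complex
  assumes b: "cmod b = 1" and \<kappa>: "0 < \<kappa>"
    and u: "cmod u = 1" "Re (cnj b * u) = - \<kappa>"
    and \<omega>: "cmod \<omega> = 1" "\<omega> ^ m = 1" "\<omega> \<noteq> 1" "Re (cnj b * (\<omega> * u)) = - \<kappa>"
    and \<rho>: "\<rho> > 0" and h_nz: "\<And>z. z \<in> ball b \<rho> \<Longrightarrow> h z \<noteq> 0"
    and h_close: "\<And>z. z \<in> ball b \<rho> \<Longrightarrow> cmod (h z - h b) < cmod (h b) * \<kappa> / 8"
    and \<eta>: "\<eta> > 0" "ball 0 \<eta> \<subseteq> (\<lambda>z. (z - b) * h z) ` ball b \<rho>"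
  obtains z1 z2 where "z1 \<in> ball 0 1 \<inter> ball b \<rho>" "z2 \<in> ball 0 1 \<inter> ball b \<rho>" "z1 \<noteq> z2"
    "((z1 - b) * h z1) ^ m = ((z2 - b) * h z2) ^ m"
proof -
  define g where "g z = (z - b) * h z" for z
  have "\<kappa> \<le> 1" using abs_Re_le_cmod[of "cnj b * u"] b u by (simp add: norm_mult)
  define M where "M = cmod (h b) * (1 + \<kappa> / 8)"
  have M: "cmod (h z) \<le> M" if "z \<in> ball b \<rho>" for z
    using h_close[OF that] norm_triangle_ineq2[of "h z" "h b"] unfolding M_def by argo
  have "M > 0" using h_nz[of b] \<rho> \<kappa> by (simp add: M_def add_pos_pos)
  define t where "t = min (\<rho> / 2) (min (\<kappa> / 8) (\<eta> / (2 * M)))"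
  have t: "0 < t" "t < \<rho>" "t < \<kappa> / 4" "t * M < \<eta>"
  proof -
    have "t \<le> \<rho> / 2" "t \<le> \<kappa> / 8" "t \<le> \<eta> / (2 * M)" by (simp_all add: t_def)
    moreover have "0 < t" using \<rho> \<kappa> \<eta> \<open>M > 0\<close> by (simp add: t_def)
    ultimately show "0 < t" "t < \<rho>" "t < \<kappa> / 4" "t * M < \<eta>"
      using \<rho> \<kappa> \<eta> \<open>M > 0\<close> by (auto simp: field_simps)
  qed
  define z1 where "z1 = b + of_real t * u"
  have z1: "z1 \<in> ball 0 1" "z1 \<in> ball b \<rho>"
    using sphere_add_scaled_in_ball[OF b u(2,1), where \<mu> = 1] t u by (auto simp: z1_def dist_norm norm_mult)
  have "cmod (\<omega> * g z1) = t * cmod (h z1)" using t u \<omega>(1) by (simp add: g_def z1_def norm_mult)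
  also have "\<dots> \<le> t * M" using M[OF z1(2)] t(1) by (intro mult_left_mono) auto
  finally have "cmod (\<omega> * g z1) < \<eta>" using t(4) by linarith
  then obtain z2 where z2: "z2 \<in> ball b \<rho>" "g z2 = \<omega> * g z1"
    using \<eta>(2) unfolding g_def by (force simp: dist_norm)
  have "cmod (h z1 / h z2 - 1) \<le> \<kappa> / 2"
    using h_close[OF z1(2)] h_close[OF z2(1)] \<open>\<kappa> \<le> 1\<close> by (intro norm_divide_sub_one_le)
  moreover have "z2 = b + of_real t * ((\<omega> * u) * (h z1 / h z2))"
    using z2(2) h_nz[OF z2(1)] by (simp add: g_def z1_def field_simps)
  moreover have "cmod (\<omega> * u) = 1" using u \<omega> by (simp add: norm_mult)
  ultimately have "z2 \<in> ball 0 1" using sphere_add_scaled_in_ball[OF b \<omega>(4)] t by metis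
  moreover have "z1 \<noteq> z2"
  proof
    assume "z1 = z2"
    then have "g z1 = \<omega> * g z1" using z2(2) by simp
    moreover have "g z1 \<noteq> 0" using h_nz[OF z1(2)] t u by (auto simp: g_def z1_def)
    ultimately show False using \<omega>(3) by simp
  qed
  moreover have "g z2 ^ m = g z1 ^ m" using \<omega>(2) by (simp add: z2(2) power_mult_distrib)
  ultimately show thesis using that z1 z2(1) unfolding g_def by (metis IntI)
qed

lemma inj_on_unit_disc_sphere_order_le_2:
  fixes R G :: "complex \<Rightarrow> complex"
  assumes b: "cmod b = 1" and inj: "inj_on R (ball 0 1)" and \<delta>: "\<delta> > 0"
    and G: "G holomorphic_on ball b \<delta>" "\<And>z. z \<in> ball b \<delta> \<Longrightarrow> G z \<noteq> 0"
    and R_eq: "\<And>z. z \<in> ball 0 1 \<inter> ball b \<delta> \<Longrightarrow> R z = c0 + (z - b) ^ m * G z"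
  shows "m \<le> 2"
proof (rule ccontr)
  assume "\<not> m \<le> 2"
  then have m: "m \<ge> 3" by simp
  obtain h where h: "h holomorphic_on ball b \<delta>" "\<And>z. z \<in> ball b \<delta> \<Longrightarrow> h z ^ m = G z"
    by (rule holomorphic_nth_root_exists[OF convex_ball open_ball G, of m]) (use m in auto)
  have h_nz: "h z \<noteq> 0" if "z \<in> ball b \<delta>" for z using h(2)[OF that] G(2)[OF that] m by (auto simp: power_0_left)
  define \<kappa> where "\<kappa> = cos (pi / m)"
  have \<kappa>: "0 < \<kappa>" using m by (simp add: \<kappa>_def cos_pi_div_pos)
  obtain u \<omega> where u: "cmod u = 1" "Re (cnj b * u) = - \<kappa>"
    and \<omega>: "cmod \<omega> = 1" "\<omega> ^ m = 1" "\<omega> \<noteq> 1" "Re (cnj b * (\<omega> * u)) = - \<kappa>"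
    using inward_directions_rotated_by_root_of_unity[OF b m] unfolding \<kappa>_def by blast
  have "0 < cmod (h b) * \<kappa> / 8" using h_nz[of b] \<delta> \<kappa> by simp
  then obtain \<rho> where \<rho>: "0 < \<rho>" "\<rho> \<le> \<delta>"
    and h_close: "\<And>z. z \<in> ball b \<rho> \<Longrightarrow> cmod (h z - h b) < cmod (h b) * \<kappa> / 8"
    using continuous_on_ball_near_centre[OF holomorphic_on_imp_continuous_on[OF h(1)] \<delta>]
    by (metis dist_norm)
  have h_nz': "h z \<noteq> 0" if "z \<in> ball b \<rho>" for z using h_nz that \<rho>(2) by auto
  define g where "g = (\<lambda>z. (z - b) * h z)"
  have g: "g holomorphic_on ball b \<rho>"
    using holomorphic_on_subset[OF h(1) subset_ball[OF \<rho>(2)]] unfolding g_def by (intro holomorphic_intros)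
  have "g b \<noteq> g (b + of_real (\<rho> / 2))" using h_nz[of "b + of_real (\<rho> / 2)"] \<rho> by (simp add: g_def dist_norm)
  moreover have "b \<in> ball b \<rho>" "b + of_real (\<rho> / 2) \<in> ball b \<rho>" using \<rho> by (auto simp: dist_norm)
  ultimately have "\<not> g constant_on ball b \<rho>" unfolding constant_on_def by metis
  then have "open (g ` ball b \<rho>)" by (intro open_mapping_thm[OF g]) auto
  moreover have "0 \<in> g ` ball b \<rho>" using \<rho> by (force simp: g_def)
  ultimately obtain \<eta> where \<eta>: "\<eta> > 0" "ball 0 \<eta> \<subseteq> g ` ball b \<rho>" by (meson open_contains_ball)
  obtain z1 z2 where z: "z1 \<in> ball 0 1 \<inter> ball b \<rho>" "z2 \<in> ball 0 1 \<inter> ball b \<rho>" "z1 \<noteq> z2"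
    and "g z1 ^ m = g z2 ^ m"
    using equal_powers_near_sphere_point[OF b \<kappa> u \<omega> \<rho>(1) h_nz' h_close \<eta>(1) \<eta>(2)[unfolded g_def]]
    unfolding g_def by auto
  moreover have "R z = c0 + g z ^ m" if "z \<in> ball 0 1 \<inter> ball b \<rho>" for z
    using R_eq[of z] h(2)[of z] that \<rho>(2) by (auto simp: g_def power_mult_distrib)
  ultimately have "R z1 = R z2" using z by simp
  then show False using inj z by (auto dest: inj_onD)
qed

lemma deriv_power_mult_eq:
  assumes S: "open S" "z \<in> S" and g: "g holomorphic_on S"
    and f_eq: "\<And>w. w \<in> S \<Longrightarrow> f w = c0 + (w - b) ^ Suc k * g w"
  shows "deriv f z = (z - b) ^ k * (of_nat (Suc k) * g z + (z - b) * deriv g z)"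
proof -
  have "deriv f z = deriv (\<lambda>w. c0 + (w - b) ^ Suc k * g w) z"
    using S f_eq by (intro deriv_cong_ev) (auto simp: eventually_nhds)
  also have "\<dots> = (z - b) ^ k * (of_nat (Suc k) * g z + (z - b) * deriv g z)"
  proof (intro DERIV_imp_deriv)
    have "((\<lambda>w. (w - b) ^ Suc k) has_field_derivative of_nat (Suc k) * (z - b) ^ k) (at z)"
      by (rule derivative_eq_intros refl | simp)+
    from DERIV_add[OF DERIV_const DERIV_mult[OF this holomorphic_derivI[OF g S]]]
    show "((\<lambda>w. c0 + (w - b) ^ Suc k * g w) has_field_derivative
                 (z - b) ^ k * (of_nat (Suc k) * g z + (z - b) * deriv g z)) (at z)"
      by (rule DERIV_cong) (simp add: algebra_simps)
  qed
  finally show ?thesis .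
qed

lemma deriv_divide_power_eq:
  assumes S: "open S" "z \<in> S" "b \<notin> S" and g: "g holomorphic_on S"
    and f_eq: "\<And>w. w \<in> S \<Longrightarrow> f w = g w / (w - b) ^ Suc k"
  shows "deriv f z = ((z - b) * deriv g z - of_nat (Suc k) * g z) / (z - b) ^ (k + 2)"
proof -
  have zb: "z - b \<noteq> 0" using S by auto
  have "deriv f z = deriv (\<lambda>w. g w / (w - b) ^ Suc k) z"
    using S f_eq by (intro deriv_cong_ev) (auto simp: eventually_nhds)
  also have "\<dots> = ((z - b) * deriv g z - of_nat (Suc k) * g z) / (z - b) ^ (k + 2)"
  proof (intro DERIV_imp_deriv)
    have d: "((\<lambda>w. (w - b) ^ Suc k) has_field_derivative of_nat (Suc k) * (z - b) ^ k) (at z)"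
      by (rule derivative_eq_intros refl | simp)+
    have "((\<lambda>w. g w / (w - b) ^ Suc k) has_field_derivative
        (deriv g z * (z - b) ^ Suc k - g z * (of_nat (Suc k) * (z - b) ^ k)) / ((z - b) ^ Suc k * (z - b) ^ Suc k)) (at z)"
      using DERIV_divide[OF holomorphic_derivI[OF g S(1,2)] d] zb by (simp add: mult.commute)
    moreover have "(deriv g z * (z - b) ^ Suc k - g z * (of_nat (Suc k) * (z - b) ^ k))
                     / ((z - b) ^ Suc k * (z - b) ^ Suc k)
                   = ((z - b) ^ k * ((z - b) * deriv g z - of_nat (Suc k) * g z))
                     / ((z - b) ^ k * (z - b) ^ (k + 2))"
      by (simp add: algebra_simps power_add[symmetric])
    ultimately show "((\<lambda>w. g w / (w - b) ^ Suc k) has_field_derivative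
        ((z - b) * deriv g z - of_nat (Suc k) * g z) / (z - b) ^ (k + 2)) (at z)"
      using zb by simp
  qed
  finally show ?thesis .
qed

lemma deriv_lower_bound_near_pole:
  fixes R G :: "complex \<Rightarrow> complex"
  assumes S: "open S" "b \<notin> S" and \<delta>: "0 < \<delta>"
    and G: "G holomorphic_on ball b \<delta>" "G b \<noteq> 0"
    and R_eq: "\<And>z. z \<in> S \<inter> ball b \<delta> \<Longrightarrow> R z = G z / (z - b) ^ Suc k"
  obtains \<rho> c where "0 < \<rho>" "0 < c" "\<And>z. z \<in> S \<inter> ball b \<rho> \<Longrightarrow> c \<le> cmod (deriv R z)"
proof -
  define K where "K z = (z - b) * deriv G z - of_nat (Suc k) * G z" for z
  have K_hol: "K holomorphic_on ball b (min \<delta> 1)"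
    using holomorphic_on_subset[OF G(1) subset_ball[OF min.cobounded1]] unfolding K_def
    by (intro holomorphic_intros holomorphic_deriv) auto
  have "K b \<noteq> 0" using G(2) by (simp add: K_def del: of_nat_Suc)
  then obtain \<rho> where \<rho>: "0 < \<rho>" "\<rho> \<le> min \<delta> 1"
    and K: "\<And>z. z \<in> ball b \<rho> \<Longrightarrow> cmod (K b) / 2 \<le> cmod (K z)"
    using continuous_on_ball_norm_ge_half[OF holomorphic_on_imp_continuous_on[OF K_hol]] \<delta> by auto
  have "cmod (K b) / 2 \<le> cmod (deriv R z)" if z: "z \<in> S \<inter> ball b \<rho>" for z
  proof -
    have "deriv R z = K z / (z - b) ^ (k + 2)"
      unfolding K_def using z \<rho> S R_eq holomorphic_on_subset[OF G(1), of "S \<inter> ball b \<delta>"]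
      by (intro deriv_divide_power_eq[of "S \<inter> ball b \<delta>"]) auto
    then have "cmod (deriv R z) = cmod (K z) / cmod (z - b) ^ (k + 2)" by (simp only: norm_divide norm_power)
    moreover have "0 < cmod (z - b)" "cmod (z - b) < 1"
      using z \<rho> S(2) by (auto simp: dist_norm norm_minus_commute)
    moreover from this(2) have "cmod (z - b) ^ (k + 2) \<le> 1" by (rule power_le_one[OF norm_ge_zero less_imp_le])
    ultimately have "cmod (K z) \<le> cmod (deriv R z)" by (simp add: le_divide_eq mult_left_le)
    then show ?thesis using K z by fastforce
  qed
  then show thesis using that[of \<rho> "cmod (K b) / 2"] \<rho> \<open>K b \<noteq> 0\<close> by simp
qed

lemma deriv_lower_bound_near_low_order_zero:
  fixes R g :: "complex \<Rightarrow> complex"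
  assumes S: "open S" and m: "0 < m" "m \<le> 2" and r: "0 < r"
    and g: "g holomorphic_on ball b r" "g b \<noteq> 0"
    and R_eq: "\<And>z. z \<in> S \<inter> ball b r \<Longrightarrow> R z = c0 + (z - b) ^ m * g z"
  obtains \<rho> c where "0 < \<rho>" "0 < c" "\<And>z. z \<in> S \<inter> ball b \<rho> \<Longrightarrow> c * cmod (z - b) \<le> cmod (deriv R z)"
proof -
  obtain k where k: "m = Suc k" "k \<le> 1" using m by (cases m) auto
  define K where "K z = of_nat m * g z + (z - b) * deriv g z" for z
  have K_hol: "K holomorphic_on ball b (min r 1)"
    using holomorphic_on_subset[OF g(1) subset_ball[OF min.cobounded1]] unfolding K_def
    by (intro holomorphic_intros holomorphic_deriv) auto
  have "K b \<noteq> 0" using g(2) m by (simp add: K_def)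
  then obtain \<rho> where \<rho>: "0 < \<rho>" "\<rho> \<le> min r 1"
    and K: "\<And>z. z \<in> ball b \<rho> \<Longrightarrow> cmod (K b) / 2 \<le> cmod (K z)"
    using continuous_on_ball_norm_ge_half[OF holomorphic_on_imp_continuous_on[OF K_hol]] r by auto
  have "cmod (K b) / 2 * cmod (z - b) \<le> cmod (deriv R z)" if z: "z \<in> S \<inter> ball b \<rho>" for z
  proof -
    have deriv_eq: "deriv R z = (z - b) ^ k * K z"
      unfolding K_def k(1) using z \<rho> S R_eq[unfolded k(1)] holomorphic_on_subset[OF g(1), of "S \<inter> ball b r"]
      by (intro deriv_power_mult_eq[of "S \<inter> ball b r"]) auto
    have "cmod (z - b) \<le> cmod (z - b) ^ k"
      using z \<rho> k(2) by (cases k) (auto simp: dist_norm norm_minus_commute)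
    moreover have "cmod (K b) / 2 \<le> cmod (K z)" using K[of z] z by simp
    ultimately have "cmod (K b) / 2 * cmod (z - b) \<le> cmod (K z) * cmod (z - b) ^ k"
      by (intro mult_mono) auto
    then show ?thesis using deriv_eq by (simp add: norm_mult norm_power mult.commute)
  qed
  then show thesis using that[of \<rho> "cmod (K b) / 2"] \<rho> \<open>K b \<noteq> 0\<close> by simp
qed

lemma inj_on_unit_disc_not_constant_near_sphere:
  assumes b: "cmod b = 1" and R: "R holomorphic_on ball 0 1" "inj_on R (ball 0 1)" and \<delta>: "0 < \<delta>"
  shows "\<not> (\<forall>z\<in>ball 0 1 \<inter> ball b \<delta>. R z = c)"
proof
  assume const: "\<forall>z\<in>ball 0 1 \<inter> ball b \<delta>. R z = c"
  have "b \<in> closure (ball 0 1)" using b by (simp add: closure_ball)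
  then obtain w where w: "w \<in> ball 0 1" "dist w b < \<delta>" using closure_approachable \<delta> by blast
  have "\<forall>\<^sub>F z in nhds w. z \<in> ball 0 1 \<inter> ball b \<delta>"
    using w by (intro eventually_nhds_in_open) (auto simp: dist_commute)
  then have "\<forall>\<^sub>F z in nhds w. R z = c" by (rule eventually_mono) (use const in blast)
  then have "deriv R w = deriv (\<lambda>_. c) w" by (rule deriv_cong_ev) simp
  moreover have "deriv R w \<noteq> 0" using holomorphic_injective_imp_regular[OF R(1) open_ball R(2) w(1)] .
  ultimately show False by simp
qed

lemma deriv_lower_bound_near_sphere_point:
  fixes R F :: "complex \<Rightarrow> complex"
  assumes b: "cmod b = 1" and R: "R holomorphic_on ball 0 1" "inj_on R (ball 0 1)"
    and \<delta>: "0 < \<delta>" and F: "F holomorphic_on ball b \<delta>"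
    and R_eq: "\<And>z. z \<in> ball 0 1 \<inter> ball b \<delta> \<Longrightarrow> R z = F z"
  obtains \<rho> c where "0 < \<rho>" "0 < c" "\<And>z. z \<in> ball 0 1 \<inter> ball b \<rho> \<Longrightarrow> c * cmod (z - b) \<le> cmod (deriv R z)"
proof -
  have nonconst: "\<not> (\<lambda>z. F z - F b) constant_on ball b \<delta>"
  proof
    assume "(\<lambda>z. F z - F b) constant_on ball b \<delta>"
    then obtain c where c: "\<And>z. z \<in> ball b \<delta> \<Longrightarrow> F z - F b = c" unfolding constant_on_def by blast
    then have "\<forall>z\<in>ball 0 1 \<inter> ball b \<delta>. R z = c + F b" using R_eq by (force simp: algebra_simps)
    then show False using inj_on_unit_disc_not_constant_near_sphere[OF b R \<delta>] by blast
  qed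
  have "(\<lambda>z. F z - F b) holomorphic_on ball b \<delta>" using F by (intro holomorphic_intros)
  then obtain g r m where m: "0 < m" and r: "0 < r" "ball b r \<subseteq> ball b \<delta>"
    and g: "g holomorphic_on ball b r" "\<And>w. w \<in> ball b r \<Longrightarrow> F w - F b = (w - b) ^ m * g w"
           "\<And>w. w \<in> ball b r \<Longrightarrow> g w \<noteq> 0"
    by (rule holomorphic_factor_zero_nonconstant[OF _ open_ball connected_ball _ _ nonconst])
       (use \<delta> in auto)
  have R_eq': "R z = F b + (z - b) ^ m * g z" if "z \<in> ball 0 1 \<inter> ball b r" for z
    using R_eq[of z] g(2)[of z] that r(2) by (auto simp: algebra_simps)
  have "m \<le> 2" using inj_on_unit_disc_sphere_order_le_2[OF b R(2) r(1) g(1,3) R_eq'] .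
  moreover have "g b \<noteq> 0" using g(3) r(1) by simp
  ultimately show thesis
    using deriv_lower_bound_near_low_order_zero[OF open_ball m _ r(1) g(1) _ R_eq'] that by blast
qed

section \<open>Univalent rational functions\<close>

lemma poly_quotient_local_form:
  fixes p q :: "complex poly"
  assumes "p \<noteq> 0" "q \<noteq> 0"
  obtains \<delta> G where "0 < \<delta>" "G holomorphic_on ball b \<delta>" "G b \<noteq> 0"
    "\<And>z. z \<in> ball b \<delta> \<Longrightarrow> z \<noteq> b \<Longrightarrow>
       poly p z / poly q z = (z - b) powi (int (order b p) - int (order b q)) * G z"
proof -
  obtain p0 where p0: "p = [:- b, 1:] ^ order b p * p0" "\<not> [:- b, 1:] dvd p0"
    using order_decomp[OF assms(1)] by blast
  obtain q0 where q0: "q = [:- b, 1:] ^ order b q * q0" "\<not> [:- b, 1:] dvd q0"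
    using order_decomp[OF assms(2)] by blast
  have "poly q0 b \<noteq> 0" using q0(2) by (simp add: poly_eq_0_iff_dvd)
  moreover have "continuous_on (ball b 1) (poly q0)" by (intro continuous_intros)
  ultimately obtain \<delta> where \<delta>: "0 < \<delta>"
    and q0_ge: "\<And>z. z \<in> ball b \<delta> \<Longrightarrow> norm (poly q0 b) / 2 \<le> norm (poly q0 z)"
    using continuous_on_ball_norm_ge_half zero_less_one by blast
  have q0_nz: "poly q0 z \<noteq> 0" if "z \<in> ball b \<delta>" for z
    using q0_ge[OF that] \<open>poly q0 b \<noteq> 0\<close> by auto
  show thesis
  proof
    show "0 < \<delta>" by fact
    show "(\<lambda>z. poly p0 z / poly q0 z) holomorphic_on ball b \<delta>" using q0_nz by (intro holomorphic_intros) auto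
    show "poly p0 b / poly q0 b \<noteq> 0" using p0(2) \<open>poly q0 b \<noteq> 0\<close> by (simp add: poly_eq_0_iff_dvd)
    fix z assume "z \<in> ball b \<delta>" "z \<noteq> b"
    then show "poly p z / poly q z
                 = (z - b) powi (int (order b p) - int (order b q)) * (poly p0 z / poly q0 z)"
      by (subst p0(1), subst q0(1)) (simp add: poly_mult poly_power power_int_diff power_int_of_nat)
  qed
qed

lemma univalent_rational_holomorphic:
  assumes "R \<in> univalent_rational"
  shows "R holomorphic_on ball 0 1"
  using assms unfolding univalent_rational_def by (auto intro!: holomorphic_intros)

lemma univalent_rational_deriv_lower_bound_near_sphere:
  assumes R: "R \<in> univalent_rational" and b: "cmod b = 1"
  obtains \<rho> c where "0 < \<rho>" "0 < c"
    "\<And>z. z \<in> ball 0 1 \<inter> ball b \<rho> \<Longrightarrow> c * cmod (z - b) \<le> cmod (deriv R z)"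
proof -
  obtain p q where q: "\<forall>z\<in>ball 0 1. poly q z \<noteq> 0" and R_def: "R = (\<lambda>z. poly p z / poly q z)"
    and inj: "inj_on R (ball 0 1)" and "deriv R 0 = 1"
    using R unfolding univalent_rational_def by blast
  have hol: "R holomorphic_on ball 0 1" using R by (rule univalent_rational_holomorphic)
  have "p \<noteq> 0" using \<open>deriv R 0 = 1\<close> by (auto simp: R_def)
  moreover have "q \<noteq> 0" using q[rule_format, of 0] by auto
  ultimately obtain \<delta> G where \<delta>: "0 < \<delta>" and G: "G holomorphic_on ball b \<delta>" "G b \<noteq> 0"
    and local_form: "\<And>z. z \<in> ball b \<delta> \<Longrightarrow> z \<noteq> b \<Longrightarrow>
       R z = (z - b) powi (int (order b p) - int (order b q)) * G z"
    unfolding R_def by (rule poly_quotient_local_form) blast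
  define k where "k = int (order b p) - int (order b q)"
  have b_out: "b \<notin> ball 0 1" using b by simp
  then have R_eq: "R z = (z - b) powi k * G z" if "z \<in> ball 0 1 \<inter> ball b \<delta>" for z
    using local_form[of z] that by (auto simp: k_def)
  show thesis
  proof (cases "k < 0")
    case True
    define j where "j = nat (- k) - 1"
    have j: "k = - int (Suc j)" using True by (simp add: j_def)
    have "R z = G z / (z - b) ^ Suc j" if "z \<in> ball 0 1 \<inter> ball b \<delta>" for z
    proof -
      have "(z - b) powi k = inverse ((z - b) ^ Suc j)" by (simp only: j power_int_minus power_int_of_nat)
      then show ?thesis using R_eq[OF that] by (simp add: divide_inverse_commute)
    qed
    then obtain \<rho> c where \<rho>: "0 < \<rho>" "0 < c"
      and bound: "\<And>z. z \<in> ball 0 1 \<inter> ball b \<rho> \<Longrightarrow> c \<le> cmod (deriv R z)"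
      using deriv_lower_bound_near_pole[OF open_ball b_out \<delta> G] by blast
    have "c * cmod (z - b) \<le> cmod (deriv R z)" if z: "z \<in> ball 0 1 \<inter> ball b (min \<rho> 1)" for z
    proof -
      have "cmod (z - b) \<le> 1" using z by (simp add: dist_norm norm_minus_commute)
      then have "c * cmod (z - b) \<le> c" using \<rho> by (simp add: mult_left_le)
      also have "c \<le> cmod (deriv R z)" using bound z by simp
      finally show ?thesis .
    qed
    then show thesis using that[of "min \<rho> 1" c] \<rho> by simp
  next
    case False
    have "R z = (z - b) ^ nat k * G z" if "z \<in> ball 0 1 \<inter> ball b \<delta>" for z
      using R_eq[OF that] False by (simp add: power_int_def)
    moreover have "(\<lambda>z. (z - b) ^ nat k * G z) holomorphic_on ball b \<delta>" using G by (intro holomorphic_intros)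
    ultimately show thesis
      using deriv_lower_bound_near_sphere_point[OF b hol inj \<delta>] that by blast
  qed
qed

lemma compact_local_lower_bounds_finite:
  fixes f :: "'a::metric_space \<Rightarrow> real" and \<phi> :: "'b \<Rightarrow> 'a \<Rightarrow> real"
  assumes K: "compact K" "U \<subseteq> K" and \<phi>: "\<And>a z. 0 \<le> \<phi> a z"
    and local_bound: "\<And>b. b \<in> K \<Longrightarrow> \<exists>\<delta>>0. \<exists>c>0. \<exists>a\<in>S. \<forall>z\<in>U \<inter> ball b \<delta>. c * \<phi> a z \<le> f z"
  obtains A c where "finite A" "A \<subseteq> S" "c > 0" "\<forall>z\<in>U. \<exists>a\<in>A. c * \<phi> a z \<le> f z"
proof -
  obtain \<delta> c a where loc: "\<And>b. b \<in> K \<Longrightarrow>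
      \<delta> b > 0 \<and> c b > 0 \<and> a b \<in> S \<and> (\<forall>z\<in>U \<inter> ball b (\<delta> b). c b * \<phi> (a b) z \<le> f z)"
    using local_bound by metis
  have cover: "K \<subseteq> (\<Union>b\<in>K. ball b (\<delta> b))" using loc by force
  obtain B where B: "B \<subseteq> K" "finite B" "K \<subseteq> (\<Union>b\<in>B. ball b (\<delta> b))"
    by (rule compactE_image[OF K(1) _ cover]) auto
  define c0 where "c0 = Min (insert 1 (c ` B))"
  have c0: "c0 > 0" "\<And>b. b \<in> B \<Longrightarrow> c0 \<le> c b"
    using B loc by (auto simp: c0_def)
  show thesis
  proof (rule that[of "a ` B" c0])
    show "finite (a ` B)" "a ` B \<subseteq> S" "c0 > 0" using B loc c0 by auto
    show "\<forall>z\<in>U. \<exists>a'\<in>a ` B. c0 * \<phi> a' z \<le> f z"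
    proof
      fix z assume z: "z \<in> U"
      then obtain b where b: "b \<in> B" "z \<in> ball b (\<delta> b)" using B(3) K(2) by blast
      have "c0 * \<phi> (a b) z \<le> c b * \<phi> (a b) z" using c0(2)[OF b(1)] \<phi> by (rule mult_right_mono)
      also have "\<dots> \<le> f z" using loc[of b] b B(1) z by auto
      finally show "\<exists>a'\<in>a ` B. c0 * \<phi> a' z \<le> f z" using b(1) by blast
    qed
  qed
qed

lemma univalent_rational_deriv_lower_bound:
  assumes R: "R \<in> univalent_rational"
  obtains A c where "finite A" "A \<subseteq> sphere 0 1" "c > 0"
    "\<forall>z\<in>ball 0 1. \<exists>a\<in>A. c * cmod (z - a) \<le> cmod (deriv R z)"
proof (rule compact_local_lower_bounds_finite[OF compact_cball ball_subset_cball norm_ge_zero])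
  fix b :: complex assume "b \<in> cball 0 1"
  show "\<exists>\<delta>>0. \<exists>c>0. \<exists>a\<in>sphere 0 1. \<forall>z\<in>ball 0 1 \<inter> ball b \<delta>. c * cmod (z - a) \<le> cmod (deriv R z)"
  proof (cases "cmod b = 1")
    case True
    then show ?thesis
      using univalent_rational_deriv_lower_bound_near_sphere[OF R True] by (metis mem_sphere_0)
  next
    case False
    \<comment> \<open>Inside the disc \<open>R'\<close> is bounded below, and as \<open>|z - a| \<le> 2\<close> any \<open>a\<close> on the circle will do.\<close>
    with \<open>b \<in> cball 0 1\<close> have b: "b \<in> ball 0 1" by simp
    have hol: "R holomorphic_on ball 0 1" using R by (rule univalent_rational_holomorphic)
    have "ball b (1 - cmod b) \<subseteq> ball 0 1" by (simp add: ball_subset_ball_iff)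
    then have "continuous_on (ball b (1 - cmod b)) (deriv R)"
      by (intro holomorphic_on_imp_continuous_on holomorphic_on_subset[OF holomorphic_deriv[OF hol open_ball]])
    moreover have "inj_on R (ball 0 1)" using R by (simp add: univalent_rational_def)
    then have "deriv R b \<noteq> 0" using holomorphic_injective_imp_regular[OF hol open_ball _ b] by blast
    ultimately obtain \<rho> where \<rho>: "0 < \<rho>"
      and bound: "\<And>z. z \<in> ball b \<rho> \<Longrightarrow> cmod (deriv R b) / 2 \<le> cmod (deriv R z)"
      using continuous_on_ball_norm_ge_half b by (metis diff_gt_0_iff_gt mem_ball_0)
    have "cmod (deriv R b) / 4 * cmod (z - 1) \<le> cmod (deriv R z)" if "z \<in> ball 0 1 \<inter> ball b \<rho>" for z
    proof -
      have "cmod (z - 1) \<le> 2" using that norm_triangle_ineq4[of z 1] by simp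
      then have "cmod (deriv R b) / 4 * cmod (z - 1) \<le> cmod (deriv R b) / 2"
        using mult_left_mono[of "cmod (z - 1)" 2 "cmod (deriv R b) / 4"] by simp
      then show ?thesis using bound[of z] that by simp
    qed
    then show ?thesis using \<rho> \<open>deriv R b \<noteq> 0\<close>
      by (intro exI[of _ \<rho>] conjI exI[of _ "cmod (deriv R b) / 4"] bexI[of _ 1]) auto
  qed
qed (use that in auto)

lemma integral_means_spectrum_le:
  assumes R: "R \<in> univalent_rational" and \<tau>: "\<tau> \<le> -2"
  shows "integral_means_spectrum R \<tau> \<le> ereal (\<bar>\<tau>\<bar> - 1)"
proof -
  obtain A c where A: "finite A" "A \<subseteq> sphere 0 1" and c: "c > 0"
    and lower: "\<forall>z\<in>ball 0 1. \<exists>a\<in>A. c * cmod (z - a) \<le> cmod (deriv R z)"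
    using univalent_rational_deriv_lower_bound[OF R] by blast
  have cont: "continuous_on (ball 0 1) (deriv R)"
    by (intro holomorphic_on_imp_continuous_on holomorphic_deriv univalent_rational_holomorphic[OF R] open_ball)
  define C where "C = c powr \<tau> * card A * 12 * pi"
  have "A \<noteq> {}" using lower[rule_format, of 0] by auto
  then have "C > 0" using A(1) c by (simp add: C_def card_gt_0_iff)
  have "\<forall>\<^sub>F r in at_left 1. r \<in> {1/2<..<1::real}" by (intro eventually_at_left_real) simp
  then have "\<forall>\<^sub>F r in at_left 1.
      0 < integral {-pi..pi} (\<lambda>t. cmod (deriv R (of_real r * cis t)) powr \<tau>)
      \<and> integral {-pi..pi} (\<lambda>t. cmod (deriv R (of_real r * cis t)) powr \<tau>)
          \<le> C * (1 - r) powr (- (\<bar>\<tau>\<bar> - 1))"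
    by eventually_elim
       (use integral_means_le_of_dist_lower_bound[OF cont A c lower \<tau>] \<tau> in \<open>auto simp: C_def abs_of_nonpos add.commute[of \<tau>]\<close>)
  then show ?thesis unfolding integral_means_spectrum_def by (rule Limsup_ln_ratio_le[OF \<open>C > 0\<close>])
qed

section \<open>Sharpness\<close>

lemma deriv_quadratic: "deriv (\<lambda>z. z - z\<^sup>2 / 2) z = 1 - z"
  for z :: complex
  by (rule DERIV_imp_deriv) (auto intro!: derivative_eq_intros)

lemma univalent_rational_quadratic: "(\<lambda>z. z - z\<^sup>2 / 2) \<in> univalent_rational"
proof -
  have "inj_on (\<lambda>z::complex. z - z\<^sup>2 / 2) (ball 0 1)"
  proof (rule inj_onI)
    fix z w :: complex assume z: "z \<in> ball 0 1" and w: "w \<in> ball 0 1" and eq: "z - z\<^sup>2 / 2 = w - w\<^sup>2 / 2"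
    have "(z - w) * (2 - (z + w)) = 2 * ((z - z\<^sup>2 / 2) - (w - w\<^sup>2 / 2))"
      by (simp add: power2_eq_square field_simps)
    then have "(z - w) * (2 - (z + w)) = 0" using eq by simp
    moreover have "z + w \<noteq> 2" using norm_triangle_ineq[of z w] z w by auto
    ultimately show "z = w" by auto
  qed
  moreover have "(\<lambda>z::complex. z - z\<^sup>2 / 2) = (\<lambda>z. poly [:0, 1, -1/2:] z / poly 1 z)"
    by (auto simp: power2_eq_square algebra_simps)
  then have "\<exists>p q. (\<forall>z\<in>ball 0 1. poly q z \<noteq> 0) \<and> (\<lambda>z::complex. z - z\<^sup>2 / 2) = (\<lambda>z. poly p z / poly q z)"
    by (intro exI[of _ "[:0, 1, -1/2:]"] exI[of _ 1]) simp
  ultimately show ?thesis unfolding univalent_rational_def by (simp add: deriv_quadratic)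
qed

lemma integral_inverse_norm_one_sub_rcis_sq_ge:
  assumes r: "0 < r" "r < 1"
  shows "1 / (1 - r) \<le> integral {-pi..pi} (\<lambda>t. cmod (1 - of_real r * cis t) powr (-2))"
proof -
  define e where "e = 1 - r"
  have e: "0 < e" "e < 1" using r by (auto simp: e_def)
  define f where "f = (\<lambda>t. cmod (1 - of_real r * cis t) powr (-2))"
  have norm_ge: "e \<le> cmod (1 - of_real r * cis t)" for t
    using norm_rcis_sub_ge[of r 1 t] r by (simp add: e_def norm_minus_commute)
  then have nz: "1 - of_real r * cis t \<noteq> 0" for t using e by (metis norm_zero not_le)
  then have f_int: "f integrable_on {a..b}" for a b
    unfolding f_def by (intro integrable_continuous_interval) (auto intro!: continuous_intros)
  have "1 / (2 * e\<^sup>2) \<le> f t" if t: "t \<in> {-e..e}" for t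
  proof -
    have "2 * r * (1 - cos t) \<le> t\<^sup>2"
      using one_minus_cos_le[of t] r mult_right_mono[of r 1 "1 - cos t"] by simp
    also have "\<dots> \<le> e\<^sup>2" using t abs_le_square_iff[of t e] e by auto
    finally have "(cmod (1 - of_real r * cis t))\<^sup>2 \<le> 2 * e\<^sup>2"
      using norm_rcis_sub_cis_sq[of r t 0] by (simp add: e_def norm_minus_commute)
    then show ?thesis
      using nz[of t] by (simp add: f_def powr_minus powr_numeral divide_simps)
  qed
  then have "integral {-e..e} (\<lambda>t. 1 / (2 * e\<^sup>2)) \<le> integral {-e..e} f"
    by (intro integral_le f_int) auto
  moreover have "integral {-e..e} (\<lambda>t. 1 / (2 * e\<^sup>2)) = 1 / e"
    using e by (simp add: power2_eq_square field_simps)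
  moreover have "integral {-e..e} f \<le> integral {-pi..pi} f"
    using e pi_gt3 by (intro integral_subset_le f_int) (auto simp: f_def)
  ultimately show ?thesis unfolding f_def e_def by linarith
qed

lemma integral_means_spectrum_quadratic_ge: "1 \<le> integral_means_spectrum (\<lambda>z. z - z\<^sup>2 / 2) (-2)"
  unfolding integral_means_spectrum_def deriv_quadratic
proof (rule le_Limsup)
  have "\<forall>\<^sub>F r in at_left 1. r \<in> {0<..<1::real}" by (intro eventually_at_left_real) simp
  then show "\<forall>\<^sub>F r in at_left 1.
      1 \<le> ereal (ln (integral {-pi..pi} (\<lambda>t. cmod (1 - of_real r * cis t) powr (-2))) / \<bar>ln (1 - r)\<bar>)"
  proof eventually_elim
    case (elim r)
    define I where "I = integral {-pi..pi} (\<lambda>t. cmod (1 - of_real r * cis t) powr (-2))"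
    have I: "1 / (1 - r) \<le> I" using integral_inverse_norm_one_sub_rcis_sq_ge elim by (simp add: I_def)
    have "0 < I" by (rule less_le_trans[OF _ I]) (use elim in simp)
    have "\<bar>ln (1 - r)\<bar> = ln (1 / (1 - r))" using elim by (simp add: ln_div)
    also have "\<dots> \<le> ln I" using I \<open>0 < I\<close> elim by (subst ln_le_cancel_iff) auto
    finally have "\<bar>ln (1 - r)\<bar> \<le> ln I" .
    moreover have "0 < \<bar>ln (1 - r)\<bar>" using elim by simp
    ultimately have "1 \<le> ln I / \<bar>ln (1 - r)\<bar>" by (simp add: le_divide_eq_1_pos)
    then show ?case unfolding I_def one_ereal_def by (simp only: ereal_less_eq)
  qed
qed simp

theorem mainTheorem6:
  shows "(\<forall>R\<in>univalent_rational. \<forall>\<tau>::real. \<tau> \<le> -2 \<longrightarrow>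
            integral_means_spectrum R \<tau> \<le> ereal (\<bar>\<tau>\<bar> - 1))
       \<and> (\<forall>R\<in>univalent_rational. integral_means_spectrum R (-2) \<le> 1)
       \<and> (SUP R\<in>univalent_rational. integral_means_spectrum R (-2)) = 1"
proof -
  have at_minus_2: "integral_means_spectrum R (-2) \<le> 1" if "R \<in> univalent_rational" for R
    using integral_means_spectrum_le[OF that, of "-2"] by (simp add: one_ereal_def)
  have "(SUP R\<in>univalent_rational. integral_means_spectrum R (-2)) = 1"
  proof (rule antisym)
    show "(SUP R\<in>univalent_rational. integral_means_spectrum R (-2)) \<le> 1"
      using at_minus_2 by (rule SUP_least)
    show "1 \<le> (SUP R\<in>univalent_rational. integral_means_spectrum R (-2))"
      using integral_means_spectrum_quadratic_ge SUP_upper[OF univalent_rational_quadratic]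
      by (rule order_trans)
  qed
  then show ?thesis using integral_means_spectrum_le at_minus_2 by blast
qed

end
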